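(* Assume Assumptions A, B, C, D hold, let $w^{(t)}$ be generated by Algorithm 2 with $\eta^{(t)}=D\sqrt{\varepsilon}$ ($D>0$), and suppose $\alpha_i^{(t)}\le\alpha/L_\phi$ for some $\alpha\in(0,\tfrac14)$. Then for all $i\in[n]$ and $0\le t<T$, $$\|h(w^{(t+1)};i)-h_i^*\|^2\le(1+\varepsilon)\|h(w^{(t)};i)-h_i^*\|^2-2(1-4\alpha)\alpha_i^{(t)}\big[\phi_i(h(w^{(t)};i))-\phi_i(h_i^* )\big]+\varepsilon(4\varepsilon+3)\Big[D^2H^2+c\big(2+(V+\varepsilon^2+2)GD^2\big)^2\Big]+\frac{4\varepsilon+3}{\varepsilon}\big\|\eta^{(t)}H_i^{(t)}v_{*\mathrm{reg}}^{(t)}-\alpha_i^{(t)}\nabla\phi_i(h(w^{(t)};i))\big\|^2.$$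
   Context: Let $n,c,d$ be positive integers and $[n]=\{1,\dots,n\}$. For each $i\in[n]$ let $h(\cdot;i):\mathbb{R}^d\to\mathbb{R}^c$ (components $h_j(\cdot;i)$) and $\phi_i:\mathbb{R}^c\to\mathbb{R}$. Each $\phi_i$ attains its minimum at $h_i^*$. Norms: Euclidean for vectors, operator for matrices. Assumption A: each $\phi_i$ is convex, bounded below, and $L_\phi$-smooth. Assumption B: each $h(\cdot;i)$ is twice continuously differentiable and there is $G>0$ with $\|\nabla_w^2 h_j(w;i)\|\le G$ for all $w,i,j$. Iteration setup: given $\varepsilon>0$, $\eta^{(t)}>0$, $\alpha_i^{(t)}>0$ and iterates $w^{(t)}$, let $H_i^{(t)}$ be the Jacobian of $h(\cdot;i)$ at $w^{(t)}$, $\Phi^{(t)}(v)=\frac{1}{2n}\sum_{i=1}^n\|\eta^{(t)}H_i^{(t)}v-\alpha_i^{(t)}\nabla\phi_i(h(w^{(t)};i))\|^2$, $\Psi^{(t)}(v)=\Phi^{(t)}(v)+\frac{\varepsilon^2}{2}\|v\|^2$, $v_{*\mathrm{reg}}^{(t)}$ its unique minimizer. Algorithm 2: $w^{(0)}$ arbitrary, $w^{(t+1)}=w^{(t)}-\eta^{(t)}v^{(t)}$ where $\|v^{(t)}-v_{*\mathrm{reg}}^{(t)}\|\le\varepsilon$, $t=0,\dots,T-1$. Assumption C (constant $V>0$): for each $0\le t<T$ there is $\hat v^{(t)}$ with $\|\hat v^{(t)}\|^2\le V$ and $\Phi^{(t)}(\hat v^{(t)})\le\varepsilon^2$. Assumption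 D (constant $H>0$): $\|H_i^{(t)}\|\le H/\sqrt\varepsilon$ for all $i\in[n]$, $0\le t<T$. *)

theory Defs
  imports "HOL-Analysis.Analysis"
begin

text \<open>The least-squares objective Phi^(t)(v) = 1/(2n) sum_{i=1..n} || eta H_i v - alpha_i g_i ||^2,
  where Jt i is the Jacobian H_i^(t) (a c x d matrix), al i = alpha_i^(t) and
  gr i = gradient of phi_i at h(w^(t); i).\<close>
definition Phi_obj ::
  "nat \<Rightarrow> real \<Rightarrow> (nat \<Rightarrow> real^'d^'c) \<Rightarrow> (nat \<Rightarrow> real) \<Rightarrow> (nat \<Rightarrow> real^'c) \<Rightarrow> real^'d \<Rightarrow> real"
  where "Phi_obj n eta Jt al gr v =
     (1 / (2 * real n)) * (\<Sum>i=1..n. (norm (eta *\<^sub>R (Jt i *v v) - al i *\<^sub>R gr i))\<^sup>2)"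

definition Psi_obj ::
  "nat \<Rightarrow> real \<Rightarrow> real \<Rightarrow> (nat \<Rightarrow> real^'d^'c) \<Rightarrow> (nat \<Rightarrow> real) \<Rightarrow> (nat \<Rightarrow> real^'c) \<Rightarrow> real^'d \<Rightarrow> real"
  where "Psi_obj n eps eta Jt al gr v = Phi_obj n eta Jt al gr v + eps\<^sup>2 / 2 * (norm v)\<^sup>2"

end

theory Submission
  imports Defs
begin

text \<open>Write \<open>u = -\<eta> v\<close> for the step and \<open>x = h(w) - h\<^sup>*\<close>. Then
  \<open>h(w + u) - h\<^sup>* = (x - \<alpha>\<^sub>i \<nabla>\<phi>\<^sub>i) + (\<alpha>\<^sub>i \<nabla>\<phi>\<^sub>i - \<eta> H\<^sub>i v\<^sub>*) + \<eta> H\<^sub>i (v\<^sub>* - v) + r\<close>,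
  where \<open>r\<close> is the first-order Taylor remainder of \<open>h\<close>. The first term is a gradient step
  on the convex smooth \<open>\<phi>\<^sub>i\<close>, which contracts the squared distance to the minimiser by
  \<open>2(1-\<alpha>)\<alpha>\<^sub>i(\<phi>\<^sub>i - \<phi>\<^sub>i\<^sup>*)\<close>; the second is the residual of the least-squares problem;
  the third is at most \<open>\<epsilon>DH\<close> by Assumption D, and the Hessian bound makes \<open>r\<close> of size
  \<open>G\<eta>\<^sup>2\<parallel>v\<parallel>\<^sup>2 = O(\<epsilon>)\<close>, since Assumption C and the regularisation keep \<open>\<parallel>v\<^sub>*\<parallel>\<^sup>2 \<le> V + 2\<close>.
  Splitting the square with Young's inequality gives the claim.\<close>

lemma lipschitz_derivative_remainder:
  fixes q q' :: "real \<Rightarrow> real"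
  assumes deriv: "\<And>s. 0 \<le> s \<Longrightarrow> s \<le> 1 \<Longrightarrow> DERIV q s :> q' s"
    and lip: "\<And>s. 0 \<le> s \<Longrightarrow> s \<le> 1 \<Longrightarrow> \<bar>q' s - q' 0\<bar> \<le> M * s"
  shows "\<bar>q 1 - q 0 - q' 0\<bar> \<le> M / 2"
proof -
  let ?upper = "\<lambda>s. q s - s * q' 0 - M * s\<^sup>2 / 2"
  let ?lower = "\<lambda>s. - (q s - s * q' 0 + M * s\<^sup>2 / 2)"
  have "?upper 1 \<le> ?upper 0"
  proof (rule DERIV_nonpos_imp_nonincreasing[of 0 1])
    fix s :: real assume s: "0 \<le> s" "s \<le> 1"
    have "DERIV ?upper s :> q' s - q' 0 - M * s"
      by (auto intro!: derivative_eq_intros deriv s simp: power2_eq_square algebra_simps)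
    moreover have "q' s - q' 0 - M * s \<le> 0" using lip[OF s] by linarith
    ultimately show "\<exists>y. DERIV ?upper s :> y \<and> y \<le> 0" by blast
  qed simp
  moreover have "?lower 1 \<le> ?lower 0"
  proof (rule DERIV_nonpos_imp_nonincreasing[of 0 1])
    fix s :: real assume s: "0 \<le> s" "s \<le> 1"
    have "DERIV ?lower s :> - (q' s - q' 0 + M * s)"
      by (auto intro!: derivative_eq_intros deriv s simp: power2_eq_square algebra_simps)
    moreover have "- (q' s - q' 0 + M * s) \<le> 0" using lip[OF s] by linarith
    ultimately show "\<exists>y. DERIV ?lower s :> y \<and> y \<le> 0" by blast
  qed simp
  ultimately have "q 1 - q 0 - q' 0 \<le> M / 2" "- (q 1 - q 0 - q' 0) \<le> M / 2" by simp_all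
  then show ?thesis by (rule abs_leI)
qed

lemma has_real_derivative_along_line:
  fixes f :: "'a::real_normed_vector \<Rightarrow> real"
  assumes "\<And>x. (f has_derivative (F x)) (at x)" "\<And>x. linear (F x)"
  shows "((\<lambda>s. f (z + s *\<^sub>R d)) has_real_derivative F (z + s *\<^sub>R d) d) (at s)"
proof -
  have "((\<lambda>s. z + s *\<^sub>R d) has_derivative (\<lambda>t. t *\<^sub>R d)) (at s)"
    by (auto intro!: derivative_eq_intros)
  from has_derivative_compose[OF this assms(1)]
  have "((\<lambda>s. f (z + s *\<^sub>R d)) has_derivative (\<lambda>t. F (z + s *\<^sub>R d) (t *\<^sub>R d))) (at s)"
    by (simp add: o_def)
  moreover have "(\<lambda>t. F (z + s *\<^sub>R d) (t *\<^sub>R d)) = (*) (F (z + s *\<^sub>R d) d)"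
    by (rule ext) (simp add: linear_scale[OF assms(2)])
  ultimately show ?thesis by (metis has_field_derivative_def)
qed

lemma linear_inner_right: "linear (\<lambda>u. a \<bullet> u)"
  by (simp add: bounded_linear.linear bounded_linear_inner_right)

lemma convex_on_gradient_inequality:
  fixes f :: "'a::real_inner \<Rightarrow> real"
  assumes cvx: "convex_on UNIV f" and grad: "\<And>x. (f has_derivative (\<lambda>u. gp x \<bullet> u)) (at x)"
  shows "gp z \<bullet> (y - z) \<le> f y - f z"
proof -
  let ?q = "\<lambda>s. f (z + s *\<^sub>R (y - z))"
  have "convex_on UNIV ?q"
  proof (rule convex_onI)
    fix t a b :: real assume t: "0 < t" "t < 1"
    have "z + ((1 - t) *\<^sub>R a + t *\<^sub>R b) *\<^sub>R (y - z)
        = (1 - t) *\<^sub>R (z + a *\<^sub>R (y - z)) + t *\<^sub>R (z + b *\<^sub>R (y - z))"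
      by (simp add: algebra_simps)
    then show "?q ((1 - t) *\<^sub>R a + t *\<^sub>R b) \<le> (1 - t) * ?q a + t * ?q b"
      using convex_onD[OF cvx, of t] t by simp
  qed simp
  moreover have "(?q has_real_derivative gp z \<bullet> (y - z)) (at 0 within UNIV)"
    using has_real_derivative_along_line[where F="\<lambda>x u. gp x \<bullet> u", OF grad linear_inner_right,
        of z "y - z" 0]
    by simp
  ultimately show ?thesis
    using convex_on_imp_above_tangent[of UNIV ?q 0 1] by simp
qed

lemma lipschitz_gradient_upper_bound:
  fixes f :: "'a::real_inner \<Rightarrow> real"
  assumes grad: "\<And>x. (f has_derivative (\<lambda>u. gp x \<bullet> u)) (at x)"
    and lip: "\<And>x y. norm (gp x - gp y) \<le> L * norm (x - y)"
  shows "f (z + d) \<le> f z + gp z \<bullet> d + L / 2 * (norm d)\<^sup>2"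
proof -
  let ?q' = "\<lambda>s. gp (z + s *\<^sub>R d) \<bullet> d"
  have "\<bar>f (z + 1 *\<^sub>R d) - f (z + 0 *\<^sub>R d) - ?q' 0\<bar> \<le> (L * (norm d)\<^sup>2) / 2"
  proof (rule lipschitz_derivative_remainder)
    fix s :: real assume s: "0 \<le> s" "s \<le> 1"
    show "((\<lambda>s. f (z + s *\<^sub>R d)) has_real_derivative ?q' s) (at s)"
      by (rule has_real_derivative_along_line[OF grad linear_inner_right])
    have "\<bar>?q' s - ?q' 0\<bar> \<le> norm (gp (z + s *\<^sub>R d) - gp z) * norm d"
      using Cauchy_Schwarz_ineq2 by (simp add: inner_diff_left[symmetric])
    also have "\<dots> \<le> L * norm (s *\<^sub>R d) * norm d"
      using lip[of "z + s *\<^sub>R d" z] by (intro mult_right_mono) auto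
    also have "\<dots> = L * (norm d)\<^sup>2 * s" using s by (simp add: power2_eq_square)
    finally show "\<bar>?q' s - ?q' 0\<bar> \<le> L * (norm d)\<^sup>2 * s" .
  qed
  from abs_le_D1[OF this] show ?thesis by simp
qed

lemma lipschitz_gradient_norm_bound:
  fixes f :: "'a::real_inner \<Rightarrow> real"
  assumes grad: "\<And>x. (f has_derivative (\<lambda>u. gp x \<bullet> u)) (at x)"
    and lip: "\<And>x y. norm (gp x - gp y) \<le> L * norm (x - y)"
    and "L > 0" and min: "\<And>x. f zs \<le> f x"
  shows "(norm (gp z))\<^sup>2 \<le> 2 * L * (f z - f zs)"
proof -
  let ?d = "- (1 / L) *\<^sub>R gp z"
  have "f zs \<le> f (z + ?d)" by (rule min)
  also have "\<dots> \<le> f z + gp z \<bullet> ?d + L / 2 * (norm ?d)\<^sup>2"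
    by (rule lipschitz_gradient_upper_bound[OF grad lip])
  also have "\<dots> = f z - (norm (gp z))\<^sup>2 / (2 * L)"
    using \<open>L > 0\<close>
    by (simp add: power2_norm_eq_inner[symmetric] power_mult_distrib field_simps power2_eq_square)
  finally show ?thesis using \<open>L > 0\<close> by (simp add: field_simps)
qed

lemma gradient_step_distance:
  fixes f :: "'a::real_inner \<Rightarrow> real"
  assumes cvx: "convex_on UNIV f"
    and grad: "\<And>x. (f has_derivative (\<lambda>u. gp x \<bullet> u)) (at x)"
    and lip: "\<And>x y. norm (gp x - gp y) \<le> L * norm (x - y)"
    and "L > 0" and min: "\<And>x. f zs \<le> f x"
    and "a > 0" and step: "a * L \<le> \<alpha>"
  shows "(norm (z - a *\<^sub>R gp z - zs))\<^sup>2
    \<le> (norm (z - zs))\<^sup>2 - 2 * a * (1 - \<alpha>) * (f z - f zs)"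
proof -
  let ?g = "gp z" and ?gap = "f z - f zs"
  have gap_nonneg: "0 \<le> ?gap" using min[of z] by simp
  have "?gap \<le> ?g \<bullet> (z - zs)"
    using convex_on_gradient_inequality[OF cvx grad, of z zs] by (simp add: inner_diff_right)
  then have "a * ?gap \<le> a * (?g \<bullet> (z - zs))" using \<open>a > 0\<close> by simp
  have "a\<^sup>2 * (norm ?g)\<^sup>2 \<le> a\<^sup>2 * (2 * L * ?gap)"
    using lipschitz_gradient_norm_bound[OF grad lip \<open>L > 0\<close> min] by (intro mult_left_mono) auto
  also have "\<dots> = 2 * a * ?gap * (a * L)" by (simp add: power2_eq_square)
  also have "\<dots> \<le> 2 * a * ?gap * \<alpha>"
    using step \<open>a > 0\<close> gap_nonneg by (intro mult_left_mono) auto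
  finally have "a\<^sup>2 * (norm ?g)\<^sup>2 \<le> 2 * a * ?gap * \<alpha>" .
  moreover have "(norm (z - a *\<^sub>R ?g - zs))\<^sup>2
      = (norm (z - zs))\<^sup>2 - 2 * (a * (?g \<bullet> (z - zs))) + a\<^sup>2 * (norm ?g)\<^sup>2"
    unfolding power2_norm_eq_inner
    by (simp add: inner_diff_left inner_diff_right inner_commute power2_eq_square algebra_simps)
  ultimately show ?thesis
    using \<open>a * ?gap \<le> a * (?g \<bullet> (z - zs))\<close> by (simp add: algebra_simps)
qed

lemma jacobian_remainder_component_bound:
  fixes hh :: "real^'d \<Rightarrow> real^'c" and JJ :: "real^'d \<Rightarrow> real^'d^'c"
    and HH :: "'c \<Rightarrow> real^'d \<Rightarrow> real^'d^'d"
  assumes dh: "\<And>x. (hh has_derivative (\<lambda>u. JJ x *v u)) (at x)"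
    and dJ: "\<And>x. ((\<lambda>y. JJ y $ j) has_derivative (\<lambda>u. HH j x *v u)) (at x)"
    and bH: "\<And>x. onorm (\<lambda>u. HH j x *v u) \<le> G"
  shows "\<bar>(hh (z + u) - hh z - JJ z *v u) $ j\<bar> \<le> G / 2 * (norm u)\<^sup>2"
proof -
  have row_lip: "norm (JJ y $ j - JJ x $ j) \<le> G * norm (y - x)" for x y
    by (rule differentiable_bound[of UNIV _ "\<lambda>x u. HH j x *v u"]) (auto simp: dJ bH)
  have dhj: "((\<lambda>y. hh y $ j) has_derivative (\<lambda>v. JJ x $ j \<bullet> v)) (at x)" for x
    using bounded_linear.has_derivative[OF bounded_linear_vec_nth dh[of x]]
    by (simp add: matrix_vector_mul_component)
  let ?q' = "\<lambda>s. JJ (z + s *\<^sub>R u) $ j \<bullet> u"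
  have "\<bar>hh (z + 1 *\<^sub>R u) $ j - hh (z + 0 *\<^sub>R u) $ j - ?q' 0\<bar> \<le> (G * (norm u)\<^sup>2) / 2"
  proof (rule lipschitz_derivative_remainder)
    fix s :: real assume s: "0 \<le> s" "s \<le> 1"
    show "((\<lambda>s. hh (z + s *\<^sub>R u) $ j) has_real_derivative ?q' s) (at s)"
      by (rule has_real_derivative_along_line[OF dhj linear_inner_right])
    have "\<bar>?q' s - ?q' 0\<bar> \<le> norm (JJ (z + s *\<^sub>R u) $ j - JJ z $ j) * norm u"
      using Cauchy_Schwarz_ineq2 by (simp add: inner_diff_left[symmetric])
    also have "\<dots> \<le> G * norm (s *\<^sub>R u) * norm u"
      using row_lip[of "z + s *\<^sub>R u" z] by (intro mult_right_mono) auto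
    also have "\<dots> = G * (norm u)\<^sup>2 * s" using s by (simp add: power2_eq_square)
    finally show "\<bar>?q' s - ?q' 0\<bar> \<le> G * (norm u)\<^sup>2 * s" .
  qed
  then show ?thesis by (simp add: matrix_vector_mul_component)
qed

lemma norm_power2_cart: "(norm (x::real^'c))\<^sup>2 = (\<Sum>j\<in>UNIV. (x $ j)\<^sup>2)"
  unfolding power2_norm_eq_inner inner_vec_def by (simp add: power2_eq_square)

lemma jacobian_remainder_norm_bound:
  fixes hh :: "real^'d \<Rightarrow> real^'c" and JJ :: "real^'d \<Rightarrow> real^'d^'c"
    and HH :: "'c \<Rightarrow> real^'d \<Rightarrow> real^'d^'d"
  assumes dh: "\<And>x. (hh has_derivative (\<lambda>u. JJ x *v u)) (at x)"
    and dJ: "\<And>j x. ((\<lambda>y. JJ y $ j) has_derivative (\<lambda>u. HH j x *v u)) (at x)"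
    and bH: "\<And>j x. onorm (\<lambda>u. HH j x *v u) \<le> G"
    and small: "G / 2 * (norm u)\<^sup>2 \<le> B"
  shows "(norm (hh (z + u) - hh z - JJ z *v u))\<^sup>2 \<le> real CARD('c) * B\<^sup>2"
proof -
  let ?r = "hh (z + u) - hh z - JJ z *v u"
  have "(?r $ j)\<^sup>2 \<le> B\<^sup>2" for j
  proof -
    have "\<bar>?r $ j\<bar> \<le> G / 2 * (norm u)\<^sup>2"
      by (rule jacobian_remainder_component_bound[OF dh dJ bH])
    then have "\<bar>?r $ j\<bar> \<le> B" using small by linarith
    then show ?thesis by (metis abs_ge_zero order_trans power2_abs power_mono)
  qed
  then have "(\<Sum>j\<in>UNIV. (?r $ j)\<^sup>2) \<le> (\<Sum>j\<in>(UNIV::'c set). B\<^sup>2)" by (intro sum_mono)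
  then show ?thesis by (simp add: norm_power2_cart)
qed

lemma power2_sum_le_weighted:
  fixes A S e :: real
  assumes "e > 0"
  shows "(A + S)\<^sup>2 \<le> (1 + e) * A\<^sup>2 + (1 + 1 / e) * S\<^sup>2"
proof -
  have "0 \<le> (e * A - S)\<^sup>2" by simp
  then have "e * (2 * A * S) \<le> e * (e * A\<^sup>2 + S\<^sup>2 / e)"
    using assms by (simp add: power2_eq_square algebra_simps)
  then have "2 * A * S \<le> e * A\<^sup>2 + S\<^sup>2 / e" using assms by simp
  then show ?thesis by (simp add: power2_eq_square algebra_simps add_divide_distrib)
qed

lemma Phi_obj_nonneg: "0 \<le> Phi_obj n eta Jt al gr v"
  unfolding Phi_obj_def by (intro mult_nonneg_nonneg sum_nonneg) auto

lemma regularized_minimizer_norm_bound: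
  assumes "eps > 0"
    and min: "Psi_obj n eps eta Jt al gr vr \<le> Psi_obj n eps eta Jt al gr vh"
    and "(norm vh)\<^sup>2 \<le> V" and "Phi_obj n eta Jt al gr vh \<le> eps\<^sup>2"
  shows "(norm vr)\<^sup>2 \<le> V + 2"
proof -
  have "eps\<^sup>2 / 2 * (norm vr)\<^sup>2 \<le> Phi_obj n eta Jt al gr vh + eps\<^sup>2 / 2 * (norm vh)\<^sup>2"
    using min Phi_obj_nonneg[of n eta Jt al gr vr] unfolding Psi_obj_def by linarith
  also have "\<dots> \<le> eps\<^sup>2 + eps\<^sup>2 / 2 * V"
    using assms(3,4) by (intro add_mono mult_left_mono) auto
  finally have "eps\<^sup>2 * (norm vr)\<^sup>2 \<le> eps\<^sup>2 * (V + 2)" by (simp add: algebra_simps)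
  then show ?thesis using \<open>eps > 0\<close> by simp
qed

text \<open>In the application \<open>A\<close> is the gradient-step term, \<open>N\<close> the least-squares residual
  and \<open>E\<^sub>1, R\<close> the two error terms of the decomposition below.\<close>
lemma perturbed_descent_inequality:
  fixes Y X A N E\<^sub>1 R a gap eps \<alpha> P :: real
  assumes "eps > 0" and "0 \<le> \<alpha>" and "\<alpha> < 1/4" and "0 \<le> a * gap"
    and "0 \<le> Y" and "0 \<le> E\<^sub>1" and "0 \<le> R"
    and Y: "Y \<le> A + N + E\<^sub>1 + R"
    and A: "A\<^sup>2 \<le> X\<^sup>2 - 2 * a * (1 - \<alpha>) * gap"
    and errors: "E\<^sub>1\<^sup>2 + R\<^sup>2 \<le> eps\<^sup>2 * P"
  shows "Y\<^sup>2 \<le> (1 + eps) * X\<^sup>2 - 2 * (1 - 4 * \<alpha>) * a * gap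
    + eps * (4 * eps + 3) * P + (4 * eps + 3) / eps * N\<^sup>2"
proof -
  have "0 \<le> eps\<^sup>2 * P" using errors by (metis add_nonneg_nonneg order_trans zero_le_power2)
  then have "0 \<le> P" using \<open>eps > 0\<close> by (simp add: zero_le_mult_iff)
  have "(E\<^sub>1 + R)\<^sup>2 \<le> 2 * eps\<^sup>2 * P"
    using power2_sum_le_weighted[of 1 E\<^sub>1 R] errors by simp
  then have "(N + (E\<^sub>1 + R))\<^sup>2 \<le> 3 * N\<^sup>2 + 3 * eps\<^sup>2 * P"
    using power2_sum_le_weighted[of 2 N "E\<^sub>1 + R"] by simp
  then have residual: "(1 + 1 / eps) * (N + (E\<^sub>1 + R))\<^sup>2
      \<le> (4 * eps + 3) / eps * N\<^sup>2 + eps * (4 * eps + 3) * P"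
  proof (rule order_trans[OF mult_left_mono])
    have "(1 + 1 / eps) * (3 * N\<^sup>2 + 3 * eps\<^sup>2 * P) = (3 + 3 / eps) * N\<^sup>2 + (3 * eps\<^sup>2 + 3 * eps) * P"
      using \<open>eps > 0\<close> by (simp add: field_simps power2_eq_square)
    also have "\<dots> \<le> (4 * eps + 3) / eps * N\<^sup>2 + eps * (4 * eps + 3) * P"
      using \<open>eps > 0\<close> \<open>0 \<le> P\<close>
      by (intro add_mono mult_right_mono) (auto simp: field_simps power2_eq_square)
    finally show "(1 + 1 / eps) * (3 * N\<^sup>2 + 3 * eps\<^sup>2 * P)
        \<le> (4 * eps + 3) / eps * N\<^sup>2 + eps * (4 * eps + 3) * P" .
  qed (use \<open>eps > 0\<close> in simp)
  have "(1 + eps) * A\<^sup>2 \<le> (1 + eps) * (X\<^sup>2 - 2 * a * (1 - \<alpha>) * gap)"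
    using A \<open>eps > 0\<close> by (intro mult_left_mono) auto
  also have "\<dots> \<le> (1 + eps) * X\<^sup>2 - 2 * (1 - 4 * \<alpha>) * a * gap"
  proof -
    have "\<alpha> * eps \<le> eps" using \<open>\<alpha> < 1/4\<close> \<open>eps > 0\<close> mult_right_mono[of \<alpha> 1 eps] by simp
    then have "(1 - 4 * \<alpha>) * (a * gap) \<le> (1 + eps) * (1 - \<alpha>) * (a * gap)"
      using \<open>0 \<le> a * gap\<close> \<open>0 \<le> \<alpha>\<close> by (intro mult_right_mono) (auto simp: algebra_simps)
    then show ?thesis by (simp add: algebra_simps)
  qed
  finally have descent: "(1 + eps) * A\<^sup>2 \<le> (1 + eps) * X\<^sup>2 - 2 * (1 - 4 * \<alpha>) * a * gap" .
  have "Y\<^sup>2 \<le> (A + (N + (E\<^sub>1 + R)))\<^sup>2"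
    using Y \<open>0 \<le> Y\<close> by (intro power_mono) (simp_all add: add.assoc)
  also have "\<dots> \<le> (1 + eps) * A\<^sup>2 + (1 + 1 / eps) * (N + (E\<^sub>1 + R))\<^sup>2"
    by (rule power2_sum_le_weighted[OF \<open>eps > 0\<close>])
  finally show ?thesis using residual descent by linarith
qed

lemma regularized_step_distance_bound:
  fixes f :: "real^'c \<Rightarrow> real" and gp :: "real^'c \<Rightarrow> real^'c" and zs :: "real^'c"
    and hh :: "real^'d \<Rightarrow> real^'c" and JJ :: "real^'d \<Rightarrow> real^'d^'c"
    and HH :: "'c \<Rightarrow> real^'d \<Rightarrow> real^'d^'d" and w v vr :: "real^'d"
  assumes cvx: "convex_on UNIV f"
    and grad: "\<And>x. (f has_derivative (\<lambda>u. gp x \<bullet> u)) (at x)"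
    and lip: "\<And>x y. norm (gp x - gp y) \<le> L * norm (x - y)"
    and "L > 0" and min: "\<And>x. f zs \<le> f x"
    and dh: "\<And>x. (hh has_derivative (\<lambda>u. JJ x *v u)) (at x)"
    and dJ: "\<And>j x. ((\<lambda>y. JJ y $ j) has_derivative (\<lambda>u. HH j x *v u)) (at x)"
    and bH: "\<And>j x. onorm (\<lambda>u. HH j x *v u) \<le> G"
    and "eps > 0" and "D > 0" and "a > 0" and "a \<le> \<alpha> / L" and "0 \<le> \<alpha>" and "\<alpha> < 1/4"
    and jac_bound: "onorm (\<lambda>u. JJ w *v u) \<le> H / sqrt eps"
    and v_near: "norm (v - vr) \<le> eps" and vr_bound: "(norm vr)\<^sup>2 \<le> V + 2"
  shows "(norm (hh (w - (D * sqrt eps) *\<^sub>R v) - zs))\<^sup>2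
    \<le> (1 + eps) * (norm (hh w - zs))\<^sup>2 - 2 * (1 - 4 * \<alpha>) * a * (f (hh w) - f zs)
      + eps * (4 * eps + 3) * (D\<^sup>2 * H\<^sup>2 + real CARD('c) * (2 + (V + eps\<^sup>2 + 2) * G * D\<^sup>2)\<^sup>2)
      + (4 * eps + 3) / eps * (norm ((D * sqrt eps) *\<^sub>R (JJ w *v vr) - a *\<^sub>R gp (hh w)))\<^sup>2"
proof -
  define eta where "eta = D * sqrt eps"
  define K where "K = 2 + (V + eps\<^sup>2 + 2) * G * D\<^sup>2"
  let ?g = "gp (hh w)" and ?u = "- eta *\<^sub>R v"
  let ?r = "hh (w + ?u) - hh w - JJ w *v ?u"
  let ?e = "eta *\<^sub>R (JJ w *v (vr - v))"
  have "eta > 0" using \<open>D > 0\<close> \<open>eps > 0\<close> by (simp add: eta_def)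
  have "a * L \<le> \<alpha>" using \<open>a \<le> \<alpha> / L\<close> \<open>L > 0\<close> by (simp add: field_simps)
  have gradient_step: "(norm (hh w - a *\<^sub>R ?g - zs))\<^sup>2
      \<le> (norm (hh w - zs))\<^sup>2 - 2 * a * (1 - \<alpha>) * (f (hh w) - f zs)"
    by (rule gradient_step_distance[OF cvx grad lip \<open>L > 0\<close> min \<open>a > 0\<close> \<open>a * L \<le> \<alpha>\<close>])
  have "norm ?e \<le> eta * (onorm (\<lambda>u. JJ w *v u) * norm (vr - v))"
    using onorm[OF matrix_vector_mul_bounded_linear[of "JJ w"]] \<open>eta > 0\<close>
    by (simp add: mult_left_mono)
  also have "\<dots> \<le> eta * (H / sqrt eps * eps)"
    using jac_bound v_near \<open>eta > 0\<close> onorm_pos_le[OF matrix_vector_mul_bounded_linear[of "JJ w"]]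
    by (intro mult_left_mono mult_mono) (auto simp: norm_minus_commute)
  also have "\<dots> = eps * (D * H)" using \<open>eps > 0\<close> by (simp add: eta_def field_simps)
  finally have e_bound: "norm ?e \<le> eps * (D * H)" .
  have "norm v \<le> norm vr + eps"
    using norm_triangle_ineq[of vr "v - vr"] v_near by simp
  then have "(norm v)\<^sup>2 \<le> 2 * (norm vr)\<^sup>2 + 2 * eps\<^sup>2"
    using power_mono[of "norm v" "norm vr + eps" 2] power2_sum_le_weighted[of 1 "norm vr" eps] by simp
  then have v_bound: "(norm v)\<^sup>2 / 2 \<le> V + 2 + eps\<^sup>2" using vr_bound by simp
  have "0 \<le> G" using order_trans[OF onorm_pos_le[OF matrix_vector_mul_bounded_linear] bH] .
  have "G / 2 * (norm ?u)\<^sup>2 = eps * (G * D\<^sup>2 * ((norm v)\<^sup>2 / 2))"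
    using \<open>eps > 0\<close> by (simp add: eta_def power_mult_distrib)
  also have "\<dots> \<le> eps * (G * D\<^sup>2 * (V + 2 + eps\<^sup>2))"
    using v_bound \<open>0 \<le> G\<close> \<open>eps > 0\<close> by (intro mult_left_mono) auto
  also have "\<dots> \<le> eps * K" using \<open>eps > 0\<close> by (simp add: K_def algebra_simps)
  finally have "G / 2 * (norm ?u)\<^sup>2 \<le> eps * K" .
  then have r_bound: "(norm ?r)\<^sup>2 \<le> real CARD('c) * (eps * K)\<^sup>2"
    by (rule jacobian_remainder_norm_bound[OF dh dJ bH])
  have "hh (w - eta *\<^sub>R v) - zs
      = (hh w - a *\<^sub>R ?g - zs) + (a *\<^sub>R ?g - eta *\<^sub>R (JJ w *v vr)) + ?e + ?r"
    using matrix_vector_mult_scaleR[of "JJ w" "- eta" v] by (simp add: algebra_simps)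
  then have triangle: "norm (hh (w - eta *\<^sub>R v) - zs) \<le> norm (hh w - a *\<^sub>R ?g - zs)
      + norm (eta *\<^sub>R (JJ w *v vr) - a *\<^sub>R ?g) + norm ?e + norm ?r"
    by (metis norm_minus_commute norm_triangle_le norm_triangle_ineq add_mono order_refl)
  have errors: "(norm ?e)\<^sup>2 + (norm ?r)\<^sup>2 \<le> eps\<^sup>2 * (D\<^sup>2 * H\<^sup>2 + real CARD('c) * K\<^sup>2)"
    using power_mono[OF e_bound norm_ge_zero, of 2] r_bound
    by (simp add: power_mult_distrib algebra_simps)
  have "0 \<le> a * (f (hh w) - f zs)" using \<open>a > 0\<close> min[of "hh w"] by simp
  from perturbed_descent_inequality[OF \<open>eps > 0\<close> \<open>0 \<le> \<alpha>\<close> \<open>\<alpha> < 1/4\<close> this norm_ge_zero norm_ge_zero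
      norm_ge_zero triangle gradient_step errors]
  show ?thesis unfolding eta_def K_def by simp
qed

theorem mainTheorem16:
  fixes n :: nat
    and h :: "nat \<Rightarrow> real^'d \<Rightarrow> real^'c"
    and J :: "nat \<Rightarrow> real^'d \<Rightarrow> real^'d^'c"
    and Hs :: "nat \<Rightarrow> 'c \<Rightarrow> real^'d \<Rightarrow> real^'d^'d"
    and phi :: "nat \<Rightarrow> real^'c \<Rightarrow> real"
    and gphi :: "nat \<Rightarrow> real^'c \<Rightarrow> real^'c"
    and hstar :: "nat \<Rightarrow> real^'c"
    and L G V H D eps alpha :: real
    and T :: nat
    and eta :: "nat \<Rightarrow> real"
    and al :: "nat \<Rightarrow> nat \<Rightarrow> real"
    and w v vreg :: "nat \<Rightarrow> real^'d"
  assumes n_pos: "n \<ge> 1"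
    and hstar_min: "\<And>i x. i \<in> {1..n} \<Longrightarrow> phi i (hstar i) \<le> phi i x"
    and L_pos: "L > 0"
    and phi_convex: "\<And>i. i \<in> {1..n} \<Longrightarrow> convex_on UNIV (phi i)"
    and phi_bdd: "\<And>i. i \<in> {1..n} \<Longrightarrow> bdd_below (range (phi i))"
    and phi_grad: "\<And>i x. i \<in> {1..n} \<Longrightarrow>
        (phi i has_derivative (\<lambda>u. gphi i x \<bullet> u)) (at x)"
    and phi_smooth: "\<And>i x y. i \<in> {1..n} \<Longrightarrow> norm (gphi i x - gphi i y) \<le> L * norm (x - y)"
    and G_pos: "G > 0"
    and h_jac: "\<And>i x. i \<in> {1..n} \<Longrightarrow> (h i has_derivative (\<lambda>u. J i x *v u)) (at x)"
    and h_hess: "\<And>i j x. i \<in> {1..n} \<Longrightarrow>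
        ((\<lambda>y. J i y $ j) has_derivative (\<lambda>u. Hs i j x *v u)) (at x)"
    and hess_cont: "\<And>i j. i \<in> {1..n} \<Longrightarrow> continuous_on UNIV (Hs i j)"
    and hess_bound: "\<And>i j x. i \<in> {1..n} \<Longrightarrow> onorm (\<lambda>u. Hs i j x *v u) \<le> G"
    and eps_pos: "eps > 0"
    and D_pos: "D > 0"
    and eta_def: "\<And>t. eta t = D * sqrt eps"
    and al_pos: "\<And>i t. i \<in> {1..n} \<Longrightarrow> al i t > 0"
    and alpha_range: "0 < alpha" "alpha < 1/4"
    and al_bound: "\<And>i t. i \<in> {1..n} \<Longrightarrow> al i t \<le> alpha / L"
    and vreg_min: "\<And>t u. t < T \<Longrightarrow>
        Psi_obj n eps (eta t) (\<lambda>i. J i (w t)) (\<lambda>i. al i t) (\<lambda>i. gphi i (h i (w t))) (vreg t)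
        \<le> Psi_obj n eps (eta t) (\<lambda>i. J i (w t)) (\<lambda>i. al i t) (\<lambda>i. gphi i (h i (w t))) u"
    and v_approx: "\<And>t. t < T \<Longrightarrow> norm (v t - vreg t) \<le> eps"
    and w_step: "\<And>t. t < T \<Longrightarrow> w (Suc t) = w t - eta t *\<^sub>R v t"
    and V_pos: "V > 0"
    and assmC: "\<And>t. t < T \<Longrightarrow> \<exists>vh. (norm vh)\<^sup>2 \<le> V \<and>
        Phi_obj n (eta t) (\<lambda>i. J i (w t)) (\<lambda>i. al i t) (\<lambda>i. gphi i (h i (w t))) vh \<le> eps\<^sup>2"
    and H_pos: "H > 0"
    and assmD: "\<And>i t. i \<in> {1..n} \<Longrightarrow> t < T \<Longrightarrow> onorm (\<lambda>u. J i (w t) *v u) \<le> H / sqrt eps"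
  shows "\<forall>i \<in> {1..n}. \<forall>t < T.
    (norm (h i (w (Suc t)) - hstar i))\<^sup>2
    \<le> (1 + eps) * (norm (h i (w t) - hstar i))\<^sup>2
      - 2 * (1 - 4 * alpha) * al i t * (phi i (h i (w t)) - phi i (hstar i))
      + eps * (4 * eps + 3) * (D\<^sup>2 * H\<^sup>2
          + real CARD('c) * (2 + (V + eps\<^sup>2 + 2) * G * D\<^sup>2)\<^sup>2)
      + (4 * eps + 3) / eps
          * (norm (eta t *\<^sub>R (J i (w t) *v vreg t) - al i t *\<^sub>R gphi i (h i (w t))))\<^sup>2"
proof (intro ballI allI impI)
  fix i t assume i: "i \<in> {1..n}" and t: "t < T"
  obtain vh where "(norm vh)\<^sup>2 \<le> V"
    and "Phi_obj n (eta t) (\<lambda>i. J i (w t)) (\<lambda>i. al i t) (\<lambda>i. gphi i (h i (w t))) vh \<le> eps\<^sup>2"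
    using assmC[OF t] by blast
  then have "(norm (vreg t))\<^sup>2 \<le> V + 2"
    using regularized_minimizer_norm_bound[OF eps_pos vreg_min[OF t]] by blast
  moreover have "w (Suc t) = w t - (D * sqrt eps) *\<^sub>R v t" using w_step[OF t] eta_def by simp
  ultimately show "(norm (h i (w (Suc t)) - hstar i))\<^sup>2
    \<le> (1 + eps) * (norm (h i (w t) - hstar i))\<^sup>2
      - 2 * (1 - 4 * alpha) * al i t * (phi i (h i (w t)) - phi i (hstar i))
      + eps * (4 * eps + 3) * (D\<^sup>2 * H\<^sup>2
          + real CARD('c) * (2 + (V + eps\<^sup>2 + 2) * G * D\<^sup>2)\<^sup>2)
      + (4 * eps + 3) / eps
          * (norm (eta t *\<^sub>R (J i (w t) *v vreg t) - al i t *\<^sub>R gphi i (h i (w t))))\<^sup>2"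
    using regularized_step_distance_bound[OF phi_convex[OF i] phi_grad[OF i] phi_smooth[OF i] L_pos
        hstar_min[OF i] h_jac[OF i] h_hess[OF i] hess_bound[OF i] eps_pos D_pos al_pos[OF i]
        al_bound[OF i] less_imp_le[OF alpha_range(1)] alpha_range(2) assmD[OF i t] v_approx[OF t]]
    by (simp add: eta_def)
qed

end
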